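(* Let $\mathcal E\subset\mathcal L^n$ contain all balls and let $\diamond:\mathcal E\to\mathcal L^n$ be sequentially approximable on $\mathcal E$ by polarizations. Then there is a hyperplane $H$ such that for each ball $B$ in $\mathbb{R}^n$, $\diamond B=\diamond B^\dagger$ up to a null set, where $B^\dagger$ is the reflection of $B$ in $H$. Consequently, translations, Brock set maps with parameter $b\in(0,1]$, and Solynin set maps (with respect to arbitrary hyperplanes) are not sequentially approximable on $\mathcal E$ by polarizations.
   Context: $\mathcal L^n$: measurable subsets of $\mathbb{R}^n$ of finite measure. Set polarization with respect to an oriented hyperplane $H$ (closed halfspaces $H^\pm$, reflection $A^\dagger$): $(P_HA)\cap H^+=(A\cup A^\dagger)\cap H^+$, $(P_HA)\cap H^-=(A\cap A^\dagger)\cap H^-$. $\diamond$ is sequentially approximable on $\mathcal E$ by polarizations if there are polarizations $\diamond_k$ with $\|1_{(\diamond_k\circ\cdots\circ\diamond_1)A}-1_{\diamond A}\|_1\to0$ for all $A\in\mathcal E$. The Brock set map with parameter $b$ relative to $H_0=u^\perp+t_0u$ maps each ball $B(x,r)$ to $B(x+(b-1)(\langle x,u\rangle-t_0)u,r)$ (up to null sets). The Solynin set map relative to an oriented hyperplane $H_0$ acts on each line orthogonal to $H_0$, identified with $\mathbb{R}$ with $H_0$ corresponding to $t$, by $A\mapsto[t-r_A,t+r_A]\cup(A\cap[t,\infty))$ with $r_A\ge0$ chosen to preserve measure; in particular it fixes balls in $H_0^+$ and maps balls with center in the open negative side to balls centered in $H_0$. *)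

theory Defs
  imports "HOL-Analysis.Analysis"
begin

definition Ln :: "'a::euclidean_space set set" where
  "Ln = {A. A \<in> sets lebesgue \<and> emeasure lebesgue A < \<infinity>}"

text \<open>An oriented hyperplane is given by a unit normal u and an offset t:
  H = {x. x \<bullet> u = t}, closed halfspaces H+ = {x. x \<bullet> u \<ge> t},
  H- = {x. x \<bullet> u \<le> t}.\<close>
definition reflect :: "'a::euclidean_space \<Rightarrow> real \<Rightarrow> 'a \<Rightarrow> 'a" where
  "reflect u t x = x - (2 * (x \<bullet> u - t)) *\<^sub>R u"

definition polarize :: "'a::euclidean_space \<Rightarrow> real \<Rightarrow> 'a set \<Rightarrow> 'a set" where
  "polarize u t A =
     ((A \<union> reflect u t ` A) \<inter> {x. x \<bullet> u \<ge> t}) \<union>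
     ((A \<inter> reflect u t ` A) \<inter> {x. x \<bullet> u \<le> t})"

fun iter_pol :: "(nat \<Rightarrow> 'a::euclidean_space \<times> real) \<Rightarrow> nat \<Rightarrow> 'a set \<Rightarrow> 'a set" where
  "iter_pol H 0 A = A"
| "iter_pol H (Suc k) A = polarize (fst (H k)) (snd (H k)) (iter_pol H k A)"

definition L1_dist :: "'a::euclidean_space set \<Rightarrow> 'a set \<Rightarrow> ennreal" where
  "L1_dist X Y = (\<integral>\<^sup>+ x. ennreal \<bar>indicator X x - indicator Y x\<bar> \<partial>lebesgue)"

definition seq_approx :: "'a::euclidean_space set set \<Rightarrow> ('a set \<Rightarrow> 'a set) \<Rightarrow> bool" where
  "seq_approx E D \<longleftrightarrow>
     (\<exists>H :: nat \<Rightarrow> 'a \<times> real. (\<forall>k. norm (fst (H k)) = 1) \<and>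
        (\<forall>A\<in>E. ((\<lambda>k. L1_dist (iter_pol H k A) (D A)) \<longlonglongrightarrow> 0)))"

text \<open>Solynin set map relative to the oriented hyperplane (u,t) (u a unit vector):
  on the line through y (y \<in> u-orthogonal complement) the slice
  S = {s. y + s u \<in> A} is replaced by [t - r, t + r] \<union> (S \<inter> [t,\<infinity>)),
  with r \<ge> 0 chosen to preserve the (one-dimensional) measure.\<close>
definition slice :: "'a::euclidean_space \<Rightarrow> 'a set \<Rightarrow> 'a \<Rightarrow> real set" where
  "slice u A y = {s. y + s *\<^sub>R u \<in> A}"

definition sol_radius :: "real \<Rightarrow> real set \<Rightarrow> real" where
  "sol_radius t S = (THE r. r \<ge> 0 \<and>
      emeasure lebesgue ({t - r..t + r} \<union> (S \<inter> {t..})) = emeasure lebesgue S)"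

definition solynin :: "'a::euclidean_space \<Rightarrow> real \<Rightarrow> 'a set \<Rightarrow> 'a set" where
  "solynin u t A = {x. let y = x - (x \<bullet> u) *\<^sub>R u; S = slice u A y in
      x \<bullet> u \<in> {t - sol_radius t S..t + sol_radius t S} \<union> (S \<inter> {t..})}"

end

theory Submission
  imports Defs
begin

(* Since P_H(A^dagger) = P_H(A), the first polarization of an approximating sequence sends a
   set and its mirror image in the first hyperplane H to the same set, and so do all later
   compositions. The images of a ball and of its mirror ball are therefore L^1-limits of one
   and the same sequence, hence agree almost everywhere. A translation or a Brock map sends
   suitable mirror balls to disjoint balls, and a Solynin map fixes a ball lying above H_0
   while squeezing a suitable mirror ball into a thin band around H_0, so none of these maps
   has this symmetry. *)

lemma inner_reflect_unit: "norm u = 1 \<Longrightarrow> reflect u t x \<bullet> u = 2 * t - x \<bullet> u"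
  by (simp add: reflect_def norm_eq_1 algebra_simps)

lemma reflect_reflect: "norm u = 1 \<Longrightarrow> reflect u t (reflect u t x) = x"
  by (simp add: reflect_def [of u t "reflect u t x"] inner_reflect_unit)
     (simp add: reflect_def algebra_simps)

lemma dist_reflect: "norm u = 1 \<Longrightarrow> dist (reflect u t x) (reflect u t y) = dist x y"
proof -
  assume "norm u = 1"
  then have uu: "u \<bullet> u = 1" by (simp add: norm_eq_1)
  have e: "reflect u t x - reflect u t y = (x - y) - (2 * ((x - y) \<bullet> u)) *\<^sub>R u"
    by (simp add: reflect_def algebra_simps)
  have "(norm (reflect u t x - reflect u t y))\<^sup>2 = (norm (x - y))\<^sup>2"
    unfolding e power2_norm_eq_inner
    by (simp add: uu inner_commute algebra_simps)
  then show ?thesis by (simp add: dist_norm)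
qed

lemma dist_reflect_self: "norm u = 1 \<Longrightarrow> dist x (reflect u t x) = 2 * \<bar>x \<bullet> u - t\<bar>"
proof -
  assume "norm u = 1"
  moreover have "x - reflect u t x = (2 * (x \<bullet> u - t)) *\<^sub>R u"
    by (simp add: reflect_def)
  ultimately show ?thesis by (simp add: dist_norm abs_if)
qed

lemma reflect_image_reflect_image: "norm u = 1 \<Longrightarrow> reflect u t ` reflect u t ` A = A"
  by (simp add: image_image reflect_reflect)

lemma reflect_image_ball: "norm u = 1 \<Longrightarrow> reflect u t ` ball x r = ball (reflect u t x) r"
  by (auto simp: dist_reflect reflect_reflect intro!: rev_image_eqI [of "reflect u t y" for y])
     (metis dist_reflect reflect_reflect)

lemma sets_lebesgue_reflect_image: "A \<in> sets lebesgue \<Longrightarrow> reflect u t ` A \<in> sets lebesgue"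
proof -
  assume "A \<in> sets lebesgue"
  moreover have "reflect u t differentiable_on A"
    unfolding reflect_def
    by (intro derivative_intros bounded_linear_imp_differentiable_on bounded_linear_inner_left)
  ultimately show ?thesis by (intro differentiable_image_in_sets_lebesgue) auto
qed

lemma polarize_reflect_image:
  "norm u = 1 \<Longrightarrow> polarize u t (reflect u t ` A) = polarize u t A"
  unfolding polarize_def by (simp add: reflect_image_reflect_image Un_commute Int_commute)

lemma iter_pol_Suc_reflect_image:
  assumes "norm (fst (H 0)) = 1"
  shows "iter_pol H (Suc k) (reflect (fst (H 0)) (snd (H 0)) ` A) = iter_pol H (Suc k) A"
  by (induction k) (simp_all add: polarize_reflect_image [OF assms])

lemma polarize_sets_lebesgue: "A \<in> sets lebesgue \<Longrightarrow> polarize u t A \<in> sets lebesgue"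
proof -
  assume A: "A \<in> sets lebesgue"
  have "closed {x. t \<le> x \<bullet> u}" "closed {x. x \<bullet> u \<le> t}"
    using closed_halfspace_ge [of t u] closed_halfspace_le [of u t] by (simp_all add: inner_commute)
  with A show ?thesis
    unfolding polarize_def by (intro sets.Un sets.Int sets_lebesgue_reflect_image) auto
qed

lemma iter_pol_sets_lebesgue: "A \<in> sets lebesgue \<Longrightarrow> iter_pol H k A \<in> sets lebesgue"
  by (induction k) (simp_all add: polarize_sets_lebesgue)

lemma emeasure_le_L1_dist_add:
  assumes K: "K \<in> sets lebesgue" and P: "P \<in> sets lebesgue" and "K \<subseteq> X - Y"
  shows "emeasure lebesgue K \<le> L1_dist P X + L1_dist P Y"
proof -
  have "emeasure lebesgue K = emeasure lebesgue ((K - P) \<union> (K \<inter> P))"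
    by (simp only: Un_Diff_Int)
  also have "\<dots> = emeasure lebesgue (K - P) + emeasure lebesgue (K \<inter> P)"
    using K P by (intro plus_emeasure [symmetric]) auto
  also have "emeasure lebesgue (K - P) = (\<integral>\<^sup>+ x. indicator (K - P) x \<partial>lebesgue)"
    using K P by simp
  also have "\<dots> \<le> L1_dist P X"
    unfolding L1_dist_def
    by (intro nn_integral_mono) (use \<open>K \<subseteq> X - Y\<close> in \<open>auto simp: indicator_def\<close>)
  also have "emeasure lebesgue (K \<inter> P) = (\<integral>\<^sup>+ x. indicator (K \<inter> P) x \<partial>lebesgue)"
    using K P by simp
  also have "\<dots> \<le> L1_dist P Y"
    unfolding L1_dist_def
    by (intro nn_integral_mono) (use \<open>K \<subseteq> X - Y\<close> in \<open>auto simp: indicator_def\<close>)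
  finally show ?thesis by (simp add: add_mono)
qed

(* Inner Lebesgue measure zero. The images D A need not be measurable (for Solynin images
   we never prove it), so the symmetry is first obtained in this weaker form. *)
definition inner_null_set :: "'a::euclidean_space set \<Rightarrow> bool" where
  "inner_null_set S \<longleftrightarrow> (\<forall>K \<in> sets lebesgue. K \<subseteq> S \<longrightarrow> emeasure lebesgue K = 0)"

lemma inner_null_set_imp_null_set:
  "inner_null_set S \<Longrightarrow> S \<in> sets lebesgue \<Longrightarrow> S \<in> null_sets lebesgue"
  by (simp add: inner_null_set_def null_sets_def)

lemma not_inner_null_setI:
  "K \<in> sets lebesgue \<Longrightarrow> K \<subseteq> S \<Longrightarrow> emeasure lebesgue K \<noteq> 0 \<Longrightarrow> \<not> inner_null_set S"
  by (auto simp: inner_null_set_def)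

lemma inner_null_set_if_common_L1_limit:
  assumes "\<And>k. P k \<in> sets lebesgue"
    and "(\<lambda>k. L1_dist (P k) X) \<longlonglongrightarrow> 0" and "(\<lambda>k. L1_dist (P k) Y) \<longlonglongrightarrow> 0"
  shows "inner_null_set (X - Y)"
  unfolding inner_null_set_def
proof (intro ballI impI)
  fix K
  assume "K \<in> sets lebesgue" "K \<subseteq> X - Y"
  then have "emeasure lebesgue K \<le> L1_dist (P k) X + L1_dist (P k) Y" for k
    using emeasure_le_L1_dist_add assms(1) by blast
  moreover have "(\<lambda>k. L1_dist (P k) X + L1_dist (P k) Y) \<longlonglongrightarrow> 0"
    using tendsto_add [OF assms(2,3)] by simp
  ultimately have "emeasure lebesgue K \<le> 0"
    by (intro LIMSEQ_le_const) auto
  then show "emeasure lebesgue K = 0" by simp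
qed

lemma seq_approx_reflection_invariant:
  assumes "seq_approx E D"
  obtains u t where "norm u = 1"
    and "\<And>A. A \<in> E \<Longrightarrow> reflect u t ` A \<in> E \<Longrightarrow> A \<in> sets lebesgue \<Longrightarrow>
           inner_null_set (D A - D (reflect u t ` A))"
proof -
  obtain H where unit: "\<And>k. norm (fst (H k)) = 1"
    and lim: "\<And>A. A \<in> E \<Longrightarrow> (\<lambda>k. L1_dist (iter_pol H k A) (D A)) \<longlonglongrightarrow> 0"
    using assms unfolding seq_approx_def by blast
  show ?thesis
  proof (rule that)
    show "norm (fst (H 0)) = 1" by (rule unit)
  next
    fix A
    let ?A' = "reflect (fst (H 0)) (snd (H 0)) ` A"
    assume A: "A \<in> E" "?A' \<in> E" "A \<in> sets lebesgue"
    have "(\<lambda>k. L1_dist (iter_pol H (Suc k) ?A') (D ?A')) \<longlonglongrightarrow> 0"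
      using lim [OF A(2)] by (rule LIMSEQ_Suc)
    then have lim_A': "(\<lambda>k. L1_dist (iter_pol H (Suc k) A) (D ?A')) \<longlonglongrightarrow> 0"
      by (simp only: iter_pol_Suc_reflect_image [of H, OF unit])
    have lim_A: "(\<lambda>k. L1_dist (iter_pol H (Suc k) A) (D A)) \<longlonglongrightarrow> 0"
      using lim [OF A(1)] by (rule LIMSEQ_Suc)
    have "\<And>k. iter_pol H (Suc k) A \<in> sets lebesgue"
      using A(3) by (rule iter_pol_sets_lebesgue)
    from inner_null_set_if_common_L1_limit [OF this lim_A lim_A']
    show "inner_null_set (D A - D ?A')" .
  qed
qed

lemma seq_approx_ae_reflection_symmetric_on_balls:
  assumes balls: "\<forall>x r. ball x r \<in> E" and meas: "\<forall>x r. D (ball x r) \<in> sets lebesgue"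
    and "seq_approx E D"
  shows "\<exists>u t. norm (u::'a::euclidean_space) = 1 \<and>
           (\<forall>x r. sym_diff (D (ball x r)) (D (reflect u t ` ball x r)) \<in> null_sets lebesgue)"
proof -
  obtain u t where u: "norm u = 1"
    and inv: "\<And>A. A \<in> E \<Longrightarrow> reflect u t ` A \<in> E \<Longrightarrow> A \<in> sets lebesgue \<Longrightarrow>
           inner_null_set (D A - D (reflect u t ` A))"
    using seq_approx_reflection_invariant [OF assms(3)] by blast
  have null: "D (ball x r) - D (reflect u t ` ball x r) \<in> null_sets lebesgue" for x r
    using inv [of "ball x r"] balls meas
    by (intro inner_null_set_imp_null_set) (simp_all add: reflect_image_ball [OF u] sets.Diff)
  have "D (reflect u t ` ball x r) - D (ball x r) \<in> null_sets lebesgue" for x r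
    using null [of "reflect u t x" r] by (simp add: reflect_image_ball [OF u] reflect_reflect [OF u])
  with u null show ?thesis by blast
qed

lemma not_seq_approx_if_separates_mirror_balls:
  assumes balls: "\<forall>x r. ball x r \<in> E"
    and separates: "\<And>u t. norm u = 1 \<Longrightarrow>
           \<exists>x r. \<not> inner_null_set (D (ball x r) - D (reflect u t ` ball x r))"
  shows "\<not> seq_approx E D"
proof
  assume "seq_approx E D"
  obtain u t where u: "norm u = 1"
    and inv: "\<And>A. A \<in> E \<Longrightarrow> reflect u t ` A \<in> E \<Longrightarrow> A \<in> sets lebesgue \<Longrightarrow>
           inner_null_set (D A - D (reflect u t ` A))"
    using seq_approx_reflection_invariant [OF \<open>seq_approx E D\<close>] by blast
  obtain x r where "\<not> inner_null_set (D (ball x r) - D (reflect u t ` ball x r))"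
    using separates [OF u, of t] by blast
  with inv [of "ball x r"] balls show False
    by (simp add: reflect_image_ball [OF u])
qed

lemma emeasure_lebesgue_ball_pos: "0 < r \<Longrightarrow> 0 < emeasure lebesgue (ball (c::'a::euclidean_space) r)"
  using content_ball_pos [of r c] emeasure_lborel_ball_finite [of c r]
  by (simp add: emeasure_eq_ennreal_measure)

lemma not_seq_approx_if_ae_moves_balls:
  fixes g :: "'a::euclidean_space \<Rightarrow> 'a"
  assumes balls: "\<forall>x r. ball x r \<in> E"
    and moves: "\<And>x r. sym_diff (D (ball x r)) (ball (g x) r) \<in> null_sets lebesgue"
    and "0 < b" and expands: "\<And>x y. b * dist x y \<le> dist (g x) (g y)"
  shows "\<not> seq_approx E D"
proof (rule not_seq_approx_if_separates_mirror_balls [OF balls])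
  fix u :: 'a and t
  assume u: "norm u = 1"
  define c where "c = (t + 1 / b) *\<^sub>R u"
  define c' where "c' = reflect u t c"
  have "dist c c' = 2 / b"
    using u \<open>0 < b\<close> by (simp add: c'_def c_def dist_reflect_self norm_eq_1)
  then have "2 \<le> dist (g c) (g c')"
    using expands [of c c'] \<open>0 < b\<close> by simp
  then have disjoint: "ball (g c) 1 \<inter> ball (g c') 1 = {}"
    by (intro disjoint_ballI) simp
  define N where
    "N = sym_diff (D (ball c 1)) (ball (g c) 1) \<union> sym_diff (D (ball c' 1)) (ball (g c') 1)"
  have N: "N \<in> null_sets lebesgue"
    unfolding N_def by (intro null_sets.Un moves)
  define K where "K = ball (g c) 1 - N"
  have "reflect u t ` ball c 1 = ball c' 1"
    by (simp add: c'_def reflect_image_ball [OF u])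
  moreover have "z \<in> D (ball c 1) - D (ball c' 1)" if "z \<in> K" for z
  proof -
    have "z \<in> ball (g c) 1" "z \<notin> ball (g c) 1 - D (ball c 1)"
      "z \<notin> D (ball c' 1) - ball (g c') 1"
      using that unfolding K_def N_def by blast+
    then show ?thesis using disjoint by blast
  qed
  ultimately have "K \<subseteq> D (ball c 1) - D (reflect u t ` ball c 1)"
    by (simp add: subset_iff)
  moreover have "K \<in> sets lebesgue"
    using N unfolding K_def by (intro sets.Diff) auto
  moreover have "emeasure lebesgue K = emeasure lebesgue (ball (g c) 1)"
    unfolding K_def using N by (intro emeasure_Diff_null_set) auto
  ultimately have "\<not> inner_null_set (D (ball c 1) - D (reflect u t ` ball c 1))"
    using emeasure_lebesgue_ball_pos [of 1 "g c"] by (intro not_inner_null_setI [of K]) auto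
  then show "\<exists>x r. \<not> inner_null_set (D (ball x r) - D (reflect u t ` ball x r))"
    by blast
qed

lemma dist_brock_map_ge:
  fixes u :: "'a::real_inner"
  assumes u: "norm u = 1" and b: "0 \<le> b" "b \<le> 1"
  shows "b * dist x y \<le> dist (x + ((b - 1) * (x \<bullet> u - t0)) *\<^sub>R u) (y + ((b - 1) * (y \<bullet> u - t0)) *\<^sub>R u)"
proof -
  define d where "d = x - y"
  have uu: "u \<bullet> u = 1" using u by (simp add: norm_eq_1)
  have diff: "(x + ((b - 1) * (x \<bullet> u - t0)) *\<^sub>R u) - (y + ((b - 1) * (y \<bullet> u - t0)) *\<^sub>R u)
      = d + ((b - 1) * (d \<bullet> u)) *\<^sub>R u"
    by (simp add: d_def algebra_simps)
  have "(d \<bullet> u)\<^sup>2 \<le> (norm d)\<^sup>2"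
    using Cauchy_Schwarz_ineq2 [of d u] u by (metis abs_ge_zero mult_1_right power2_abs power_mono)
  then have "(b\<^sup>2 - 1) * (norm d)\<^sup>2 \<le> (b\<^sup>2 - 1) * (d \<bullet> u)\<^sup>2"
    using b by (intro mult_left_mono_neg) (auto simp: power_le_one)
  also have "\<dots> = (norm (d + ((b - 1) * (d \<bullet> u)) *\<^sub>R u))\<^sup>2 - (norm d)\<^sup>2"
    unfolding power2_norm_eq_inner
    by (simp add: inner_add_left inner_add_right inner_commute uu)
      (simp add: algebra_simps power2_eq_square)
  finally have "(b * norm d)\<^sup>2 \<le> (norm (d + ((b - 1) * (d \<bullet> u)) *\<^sub>R u))\<^sup>2"
    by (simp add: algebra_simps)
  then have "b * norm d \<le> norm (d + ((b - 1) * (d \<bullet> u)) *\<^sub>R u)"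
    by (rule power2_le_imp_le) simp
  then show ?thesis by (simp add: dist_norm diff d_def)
qed

lemma not_seq_approx_translation:
  assumes "\<forall>x r. ball x r \<in> E"
  shows "\<not> seq_approx E (\<lambda>A. (\<lambda>x. x + v) ` A)"
proof (rule not_seq_approx_if_ae_moves_balls [where g = "\<lambda>x. x + v" and b = 1, OF assms])
  show "sym_diff ((\<lambda>x. x + v) ` ball x r) (ball (x + v) r) \<in> null_sets lebesgue" for x r
    using ball_translation [of v x r] by (simp add: add.commute)
qed simp_all

lemma not_seq_approx_brock:
  assumes "\<forall>x r. ball x r \<in> E" and "norm u = 1" and "0 < b" "b \<le> 1"
    and "\<forall>x r. sym_diff (D (ball x r)) (ball (x + ((b - 1) * (x \<bullet> u - t0)) *\<^sub>R u) r)
               \<in> null_sets lebesgue"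
  shows "\<not> seq_approx E D"
  using assms dist_brock_map_ge [OF assms(2)]
  by (intro not_seq_approx_if_ae_moves_balls [where g = "\<lambda>x. x + ((b - 1) * (x \<bullet> u - t0)) *\<^sub>R u"])
    auto

lemma abs_inner_diff_less_if_mem_ball:
  "norm u = 1 \<Longrightarrow> z \<in> ball c r \<Longrightarrow> \<bar>z \<bullet> u - c \<bullet> u\<bar> < r"
  using Cauchy_Schwarz_ineq2 [of "z - c" u] by (simp add: dist_norm norm_minus_commute inner_diff_left)

lemma slice_ball_subset:
  assumes "norm u = 1" and "y \<bullet> u = 0"
  shows "slice u (ball q r) y \<subseteq> {q \<bullet> u - r <..< q \<bullet> u + r}"
proof
  fix s
  assume "s \<in> slice u (ball q r) y"
  then have "\<bar>(y + s *\<^sub>R u) \<bullet> u - q \<bullet> u\<bar> < r"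
    using abs_inner_diff_less_if_mem_ball [OF assms(1)] by (simp add: slice_def)
  with assms show "s \<in> {q \<bullet> u - r <..< q \<bullet> u + r}"
    by (simp add: inner_add_left norm_eq_1 abs_less_iff)
qed

lemma mem_solynin_if_above: "z \<in> A \<Longrightarrow> t \<le> z \<bullet> u \<Longrightarrow> z \<in> solynin u t A"
  by (simp add: solynin_def slice_def Let_def)

lemma sol_radius_below:
  assumes "S \<subseteq> {..<t}" and "emeasure lebesgue S < \<infinity>"
  shows "sol_radius t S = measure lebesgue S / 2"
proof -
  have "S \<inter> {t..} = {}" using assms(1) by auto
  then have interval: "emeasure lebesgue ({t - r..t + r} \<union> (S \<inter> {t..})) = ennreal (2 * r)"
    if "0 \<le> r" for r
    using that by simp
  have S: "emeasure lebesgue S = ennreal (measure lebesgue S)"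
    using assms(2) by (simp add: emeasure_eq_ennreal_measure)
  show ?thesis
    unfolding sol_radius_def by (rule the_equality) (auto simp: interval S)
qed

lemma not_mem_solynin_if_slice_below:
  assumes below: "slice u A (z - (z \<bullet> u) *\<^sub>R u) \<subseteq> {..<t}"
    and small: "emeasure lebesgue (slice u A (z - (z \<bullet> u) *\<^sub>R u)) \<le> ennreal (2 * \<rho>)"
    and "0 \<le> \<rho>" and "t + \<rho> < z \<bullet> u"
  shows "z \<notin> solynin u t A"
proof -
  define S where "S = slice u A (z - (z \<bullet> u) *\<^sub>R u)"
  have S_finite: "emeasure lebesgue S < \<infinity>"
    using small by (simp add: S_def) (metis ennreal_less_top le_less_trans)
  then have "ennreal (measure lebesgue S) \<le> ennreal (2 * \<rho>)"
    using small by (simp add: S_def emeasure_eq_ennreal_measure)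
  then have "measure lebesgue S \<le> 2 * \<rho>"
    using \<open>0 \<le> \<rho>\<close> by simp
  then have "z \<bullet> u \<notin> {t - sol_radius t S..t + sol_radius t S} \<union> (S \<inter> {t..})"
    using sol_radius_below [OF below [folded S_def] S_finite] below \<open>t + \<rho> < z \<bullet> u\<close>
    by (auto simp: S_def)
  then show ?thesis by (simp add: solynin_def S_def Let_def)
qed

lemma ball_above_with_mirror_slices_below:
  fixes u w :: "'a::euclidean_space"
  assumes u: "norm u = 1" and w: "norm w = 1"
  obtains c where "\<And>z. z \<in> ball c 1 \<Longrightarrow> t + 1 < z \<bullet> u"
    and "\<And>z. z \<in> ball c 1 \<Longrightarrow> slice u (ball (reflect w \<tau> c) 1) (z - (z \<bullet> u) *\<^sub>R u) \<subseteq> {..<t}"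
proof (cases "w \<bullet> u = 0")
  case False
  define M where "M = max (t + 2) (2 * \<tau> * (w \<bullet> u) - t + 1)"
  define c where "c = (M / (w \<bullet> u)) *\<^sub>R w"
  have cu: "c \<bullet> u = M" using False by (simp add: c_def)
  have "reflect w \<tau> c \<bullet> u = 2 * \<tau> * (w \<bullet> u) - M"
    using False w by (simp add: c_def reflect_def norm_eq_1 algebra_simps)
  then have mirror_below: "reflect w \<tau> c \<bullet> u + 1 \<le> t"
    by (simp add: M_def)
  show ?thesis
  proof (rule that)
    show "t + 1 < z \<bullet> u" if "z \<in> ball c 1" for z
      using abs_inner_diff_less_if_mem_ball [OF u that] cu by (simp add: M_def)
    show "slice u (ball (reflect w \<tau> c) 1) (z - (z \<bullet> u) *\<^sub>R u) \<subseteq> {..<t}" for z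
      using slice_ball_subset [OF u, of "z - (z \<bullet> u) *\<^sub>R u"] u mirror_below
      by (force simp: inner_diff_left norm_eq_1)
  qed
next
  case True
  \<comment> \<open>The reflection does not move the \<open>u\<close>-coordinate, so we separate along \<open>w\<close> instead:
    the lines in direction \<open>u\<close> through the ball miss its mirror image.\<close>
  define c where "c = (\<tau> + 1) *\<^sub>R w + (t + 2) *\<^sub>R u"
  have uw: "u \<bullet> w = 0" using True by (simp add: inner_commute)
  have cu: "c \<bullet> u = t + 2" using True u by (simp add: c_def inner_add_left norm_eq_1)
  have "reflect w \<tau> c \<bullet> w = \<tau> - 1"
    using uw w by (simp add: c_def reflect_def inner_add_left inner_diff_left norm_eq_1)
  moreover have cw: "c \<bullet> w = \<tau> + 1"
    using uw w by (simp add: c_def inner_add_left norm_eq_1)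
  ultimately have "slice u (ball (reflect w \<tau> c) 1) (z - (z \<bullet> u) *\<^sub>R u) = {}"
    if "z \<in> ball c 1" for z
    using abs_inner_diff_less_if_mem_ball [OF w that]
      abs_inner_diff_less_if_mem_ball [OF w, of "z - (z \<bullet> u) *\<^sub>R u + _ *\<^sub>R u" "reflect w \<tau> c" 1]
    by (force simp: slice_def inner_add_left inner_diff_left uw)
  moreover have "t + 1 < z \<bullet> u" if "z \<in> ball c 1" for z
    using abs_inner_diff_less_if_mem_ball [OF u that] cu by simp
  ultimately show ?thesis using that by blast
qed

lemma not_seq_approx_solynin:
  assumes balls: "\<forall>x r. ball x r \<in> E" and u: "norm (u::'a::euclidean_space) = 1"
  shows "\<not> seq_approx E (solynin u t)"
proof (rule not_seq_approx_if_separates_mirror_balls [OF balls])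
  fix w :: 'a and \<tau>
  assume w: "norm w = 1"
  obtain c where above: "\<And>z. z \<in> ball c 1 \<Longrightarrow> t + 1 < z \<bullet> u"
    and mirror_below: "\<And>z. z \<in> ball c 1 \<Longrightarrow>
      slice u (ball (reflect w \<tau> c) 1) (z - (z \<bullet> u) *\<^sub>R u) \<subseteq> {..<t}"
    using ball_above_with_mirror_slices_below [OF u w] by blast
  have "z \<in> solynin u t (ball c 1) - solynin u t (reflect w \<tau> ` ball c 1)" if z: "z \<in> ball c 1" for z
  proof -
    have "emeasure lebesgue (slice u (ball (reflect w \<tau> c) 1) (z - (z \<bullet> u) *\<^sub>R u))
        \<le> emeasure lebesgue {reflect w \<tau> c \<bullet> u - 1 .. reflect w \<tau> c \<bullet> u + 1}"
      using slice_ball_subset [OF u, of "z - (z \<bullet> u) *\<^sub>R u" "reflect w \<tau> c" 1] u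
      by (intro emeasure_mono) (auto simp: inner_diff_left norm_eq_1)
    then have "z \<notin> solynin u t (ball (reflect w \<tau> c) 1)"
      using above [OF z] by (intro not_mem_solynin_if_slice_below [OF mirror_below [OF z], of 1]) auto
    moreover have "z \<in> solynin u t (ball c 1)"
      using above [OF z] z by (intro mem_solynin_if_above) auto
    ultimately show ?thesis by (simp add: reflect_image_ball [OF w])
  qed
  then have "ball c 1 \<subseteq> solynin u t (ball c 1) - solynin u t (reflect w \<tau> ` ball c 1)"
    by blast
  then have "\<not> inner_null_set (solynin u t (ball c 1) - solynin u t (reflect w \<tau> ` ball c 1))"
    using emeasure_lebesgue_ball_pos [of 1 c] by (intro not_inner_null_setI [of "ball c 1"]) auto
  then show "\<exists>x r. \<not> inner_null_set (solynin u t (ball x r) - solynin u t (reflect w \<tau> ` ball x r))"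
    by blast
qed

theorem lemma5p3:
  shows
   "(\<forall>(E :: 'a::euclidean_space set set) D.
       E \<subseteq> Ln \<and> (\<forall>x r. ball x r \<in> E) \<and> (\<forall>A\<in>E. D A \<in> Ln) \<and> seq_approx E D \<longrightarrow>
       (\<exists>u t. norm u = 1 \<and>
          (\<forall>x r. (D (ball x r) - D (reflect u t ` ball x r)) \<union>
                 (D (reflect u t ` ball x r) - D (ball x r)) \<in> null_sets lebesgue)))
    \<and> (\<forall>(E :: 'a set set) v.
       E \<subseteq> Ln \<and> (\<forall>x r. ball x r \<in> E) \<longrightarrow> \<not> seq_approx E (\<lambda>A. (\<lambda>x. x + v) ` A))
    \<and> (\<forall>(E :: 'a set set) D u t0 b.
       E \<subseteq> Ln \<and> (\<forall>x r. ball x r \<in> E) \<and> (\<forall>A\<in>E. D A \<in> Ln) \<and>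
       norm u = 1 \<and> 0 < b \<and> b \<le> 1 \<and>
       (\<forall>x r. (D (ball x r) - ball (x + ((b - 1) * (x \<bullet> u - t0)) *\<^sub>R u) r) \<union>
              (ball (x + ((b - 1) * (x \<bullet> u - t0)) *\<^sub>R u) r - D (ball x r)) \<in> null_sets lebesgue)
       \<longrightarrow> \<not> seq_approx E D)
    \<and> (\<forall>(E :: 'a set set) u t.
       E \<subseteq> Ln \<and> (\<forall>x r. ball x r \<in> E) \<and> norm u = 1 \<longrightarrow> \<not> seq_approx E (solynin u t))"
proof (intro conjI allI impI)
  fix E :: "'a set set" and D
  assume E: "E \<subseteq> Ln \<and> (\<forall>x r. ball x r \<in> E) \<and> (\<forall>A\<in>E. D A \<in> Ln) \<and> seq_approx E D"
  then have "\<forall>x r. D (ball x r) \<in> sets lebesgue" by (simp add: Ln_def)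
  with E show "\<exists>u t. norm u = 1 \<and>
      (\<forall>x r. sym_diff (D (ball x r)) (D (reflect u t ` ball x r)) \<in> null_sets lebesgue)"
    using seq_approx_ae_reflection_symmetric_on_balls by blast
next
  fix E :: "'a set set" and v :: 'a
  assume "E \<subseteq> Ln \<and> (\<forall>x r. ball x r \<in> E)"
  then show "\<not> seq_approx E (\<lambda>A. (\<lambda>x. x + v) ` A)"
    using not_seq_approx_translation by blast
next
  fix E :: "'a set set" and D u t0 and b :: real
  assume "E \<subseteq> Ln \<and> (\<forall>x r. ball x r \<in> E) \<and> (\<forall>A\<in>E. D A \<in> Ln) \<and> norm u = 1 \<and> 0 < b \<and> b \<le> 1 \<and>
    (\<forall>x r. sym_diff (D (ball x r)) (ball (x + ((b - 1) * (x \<bullet> u - t0)) *\<^sub>R u) r)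
       \<in> null_sets lebesgue)"
  then show "\<not> seq_approx E D"
    using not_seq_approx_brock by blast
next
  fix E :: "'a set set" and u :: 'a and t
  assume "E \<subseteq> Ln \<and> (\<forall>x r. ball x r \<in> E) \<and> norm u = 1"
  then show "\<not> seq_approx E (solynin u t)"
    using not_seq_approx_solynin by blast
qed

end
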